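(* For every integer $n\ge1$, $\Omega'_n=\Omega_n$.
   Context: $V_n=\{(v_0,v_1,v_2)\in\mathbb{Z}^3: 0\le v_0\le v_1\le 1,\ v_1\le v_2\le n+1\}$, elements written as words $v_0v_1v_2$. A Wang tile is $t=(a,b,c,d)$ with $\mathrm{RIGHT}(t)=a$, $\mathrm{TOP}(t)=b$, $\mathrm{LEFT}(t)=c$, $\mathrm{BOTTOM}(t)=d$; $\hat t=(b,a,d,c)$, $\hat S=\{\hat t:t\in S\}$. Define (as (right, top, left, bottom)): $W_n=\{(11(i+1),11(j+1),11i,11j):1\le i,j\le n\}$; $b_n^i=(00(i+1),111,00i,11n)$, $B'_n=\{b_n^i:0\le i\le n\}$, $B_n=\{b_n^i:0\le i\le n-1\}$; $G_n=\{(01(i+1),111,00i,11(n+1)):0\le i\le n\}$; $Y_n=\{(01(i+1),112,01i,11(n+1)):1\le i\le n\}$; $A_n=\{(00(i+1),112,01i,11n):1\le i\le n\}$; $j_n^{k,l,r,s}=((0,k,l),(0,r,s),(0,s,r+n),(0,l,k+n))$ for $(k,l),(r,s)\in\{(0,0),(0,1),(1,1)\}$; $J'_n$ is the set of these 9 tiles and $J_n=J'_n\setminus\{j_n^{0,0,1,1},j_n^{1,1,0,0}\}$. $\mathcal T'_n=W_n\cup B'_n\cup G_n\cup Y_n\cup A_n\cup\hat B'_n\cup\hat G_n\cup\hat Y_n\cup\hat A_n\cup J'_n$ and $\mathcal T_n=W_n\cup B_n\cup G_n\cup Y_n\cup\hat B_n\cup\hat G_n\cup\hat Y_n\cup J_n$.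 $\Omega'_n$ (resp. $\Omega_n$) is the set of configurations $x:\mathbb Z^2\to\mathcal T'_n$ (resp. $\mathcal T_n$) with $\mathrm{RIGHT}(x(\mathbf m))=\mathrm{LEFT}(x(\mathbf m+\mathbf e_1))$ and $\mathrm{TOP}(x(\mathbf m))=\mathrm{BOTTOM}(x(\mathbf m+\mathbf e_2))$ for all $\mathbf m\in\mathbb Z^2$. *)

theory Defs
  imports Main
begin

text \<open>Colors are triples (v0,v1,v2) of integers, a word v0v1v2.
  A Wang tile is (right, top, left, bottom).\<close>
type_synonym color = "int \<times> int \<times> int"
type_synonym tile = "color \<times> color \<times> color \<times> color"

definition RIGHT :: "tile \<Rightarrow> color" where "RIGHT t = (case t of (a,b,c,d) \<Rightarrow> a)"
definition TOP :: "tile \<Rightarrow> color" where "TOP t = (case t of (a,b,c,d) \<Rightarrow> b)"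
definition LEFT :: "tile \<Rightarrow> color" where "LEFT t = (case t of (a,b,c,d) \<Rightarrow> c)"
definition BOTTOM :: "tile \<Rightarrow> color" where "BOTTOM t = (case t of (a,b,c,d) \<Rightarrow> d)"

definition hat :: "tile \<Rightarrow> tile" where "hat t = (case t of (a,b,c,d) \<Rightarrow> (b,a,d,c))"

definition hatS :: "tile set \<Rightarrow> tile set" where "hatS S = hat ` S"

definition V :: "int \<Rightarrow> color set" where
  "V n = {(v0,v1,v2). 0 \<le> v0 \<and> v0 \<le> v1 \<and> v1 \<le> 1 \<and> v1 \<le> v2 \<and> v2 \<le> n + 1}"

definition W :: "int \<Rightarrow> tile set" where
  "W n = {((1,1,i+1),(1,1,j+1),(1,1,i),(1,1,j)) | i j. 1 \<le> i \<and> i \<le> n \<and> 1 \<le> j \<and> j \<le> n}"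

definition btile :: "int \<Rightarrow> int \<Rightarrow> tile" where
  "btile n i = ((0,0,i+1),(1,1,1),(0,0,i),(1,1,n))"

definition B' :: "int \<Rightarrow> tile set" where "B' n = {btile n i | i. 0 \<le> i \<and> i \<le> n}"
definition B :: "int \<Rightarrow> tile set" where "B n = {btile n i | i. 0 \<le> i \<and> i \<le> n - 1}"

definition G :: "int \<Rightarrow> tile set" where
  "G n = {((0,1,i+1),(1,1,1),(0,0,i),(1,1,n+1)) | i. 0 \<le> i \<and> i \<le> n}"

definition Y :: "int \<Rightarrow> tile set" where
  "Y n = {((0,1,i+1),(1,1,2),(0,1,i),(1,1,n+1)) | i. 1 \<le> i \<and> i \<le> n}"

definition A :: "int \<Rightarrow> tile set" where
  "A n = {((0,0,i+1),(1,1,2),(0,1,i),(1,1,n)) | i. 1 \<le> i \<and> i \<le> n}"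

definition jtile :: "int \<Rightarrow> int \<Rightarrow> int \<Rightarrow> int \<Rightarrow> int \<Rightarrow> tile" where
  "jtile n k l r s = ((0,k,l),(0,r,s),(0,s,r+n),(0,l,k+n))"

definition Jpairs :: "(int \<times> int) set" where "Jpairs = {(0,0),(0,1),(1,1)}"

definition J' :: "int \<Rightarrow> tile set" where
  "J' n = {jtile n k l r s | k l r s. (k,l) \<in> Jpairs \<and> (r,s) \<in> Jpairs}"

definition J :: "int \<Rightarrow> tile set" where
  "J n = J' n - {jtile n 0 0 1 1, jtile n 1 1 0 0}"

definition T' :: "int \<Rightarrow> tile set" where
  "T' n = W n \<union> B' n \<union> G n \<union> Y n \<union> A n \<union> hatS (B' n) \<union> hatS (G n) \<union> hatS (Y n)
          \<union> hatS (A n) \<union> J' n"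

definition T :: "int \<Rightarrow> tile set" where
  "T n = W n \<union> B n \<union> G n \<union> Y n \<union> hatS (B n) \<union> hatS (G n) \<union> hatS (Y n) \<union> J n"

definition Omega :: "tile set \<Rightarrow> (int \<times> int \<Rightarrow> tile) set" where
  "Omega S = {x. (\<forall>m. x m \<in> S) \<and>
     (\<forall>a b. RIGHT (x (a,b)) = LEFT (x (a+1,b)) \<and> TOP (x (a,b)) = BOTTOM (x (a,b+1)))}"

end

theory Submission
  imports Defs
begin

(*
  The first component v0 of a colour is preserved across every tile of T'_n, horizontally and
  vertically, so in a valid configuration each row and each column has a type in {0,1}. Crossing
  a row of type 1 raises the last component v2 of the vertical colour by one, and v2 <= n + 1,
  so rows of type 0 occur in every window of n + 2 consecutive rows; by transposition the same
  holds for columns. Counting v2 between consecutive rows of type 0 shows that a tile of A_n at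
  (a, b) forces another one at (a + 1, b + n), so every column to its right would have type 1,
  which is impossible. A similar count in the column of j^{1,1,0,0} and the column to its left
  rules that tile out, and b_n^n is excluded because no tile has left colour 00(n+1). Since
  T'_n is closed under hat, transposing the configuration excludes the hatted tiles and
  j^{0,0,1,1} as well.
*)

lemma int_first_above:
  fixes P :: "int \<Rightarrow> bool"
  assumes "b < c" "P c"
  obtains c' where "b < c'" "P c'" "\<And>d. b < d \<Longrightarrow> d < c' \<Longrightarrow> \<not> P d"
proof -
  let ?S = "{d. b < d \<and> d \<le> c \<and> P d}"
  have fin: "finite ?S" by (rule finite_subset[of _ "{b<..c}"]) auto
  have "c \<in> ?S" using assms by simp
  then have min: "Min ?S \<in> ?S" using fin Min_in by blast
  have "\<not> P d" if "b < d" "d < Min ?S" for d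
    using Min_le[OF fin, of d] min that by auto
  with min show ?thesis using that by blast
qed

lemma int_last_below:
  fixes P :: "int \<Rightarrow> bool"
  assumes "c < b" "P c"
  obtains c' where "c' < b" "P c'" "\<And>d. c' < d \<Longrightarrow> d < b \<Longrightarrow> \<not> P d"
proof -
  let ?S = "{d. c \<le> d \<and> d < b \<and> P d}"
  have fin: "finite ?S" by (rule finite_subset[of _ "{c..<b}"]) auto
  have "c \<in> ?S" using assms by simp
  then have max: "Max ?S \<in> ?S" using fin Max_in by blast
  have "\<not> P d" if "Max ?S < d" "d < b" for d
    using Max_ge[OF fin, of d] max that by auto
  with max show ?thesis using that by blast
qed

fun v0 :: "color \<Rightarrow> int" where "v0 (c, _, _) = c"
fun v1 :: "color \<Rightarrow> int" where "v1 (_, c, _) = c"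
fun v2 :: "color \<Rightarrow> int" where "v2 (_, _, c) = c"

lemma mem_V_iff:
  "c \<in> V n \<longleftrightarrow> 0 \<le> v0 c \<and> v0 c \<le> v1 c \<and> v1 c \<le> 1 \<and> v1 c \<le> v2 c \<and> v2 c \<le> n + 1"
  by (cases c) (auto simp: V_def)

lemma tile_sides [simp]:
  "RIGHT (r, t, l, b) = r" "TOP (r, t, l, b) = t" "LEFT (r, t, l, b) = l" "BOTTOM (r, t, l, b) = b"
  by (simp_all add: RIGHT_def TOP_def LEFT_def BOTTOM_def)

lemma hat_sides [simp]:
  "RIGHT (hat t) = TOP t" "TOP (hat t) = RIGHT t" "LEFT (hat t) = BOTTOM t" "BOTTOM (hat t) = LEFT t"
  by (simp_all add: hat_def split: prod.splits)

lemma hat_hat [simp]: "hat (hat t) = t"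
  by (simp add: hat_def split: prod.splits)

lemma mem_hatS_iff: "t \<in> hatS S \<longleftrightarrow> hat t \<in> S"
  by (force simp: hatS_def)

lemma hat_jtile: "hat (jtile n k l r s) = jtile n r s k l"
  by (simp add: hat_def jtile_def)

lemma T'_cases [consumes 1, case_names W B G Y A hat_B hat_G hat_Y hat_A J]:
  assumes "t \<in> T' n"
  obtains (W) i j where "1 \<le> i" "i \<le> n" "1 \<le> j" "j \<le> n"
      "t = ((1,1,i+1),(1,1,j+1),(1,1,i),(1,1,j))"
  | (B) i where "0 \<le> i" "i \<le> n" "t = ((0,0,i+1),(1,1,1),(0,0,i),(1,1,n))"
  | (G) i where "0 \<le> i" "i \<le> n" "t = ((0,1,i+1),(1,1,1),(0,0,i),(1,1,n+1))"
  | (Y) i where "1 \<le> i" "i \<le> n" "t = ((0,1,i+1),(1,1,2),(0,1,i),(1,1,n+1))"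
  | (A) i where "1 \<le> i" "i \<le> n" "t = ((0,0,i+1),(1,1,2),(0,1,i),(1,1,n))"
  | (hat_B) i where "0 \<le> i" "i \<le> n" "t = ((1,1,1),(0,0,i+1),(1,1,n),(0,0,i))"
  | (hat_G) i where "0 \<le> i" "i \<le> n" "t = ((1,1,1),(0,1,i+1),(1,1,n+1),(0,0,i))"
  | (hat_Y) i where "1 \<le> i" "i \<le> n" "t = ((1,1,2),(0,1,i+1),(1,1,n+1),(0,1,i))"
  | (hat_A) i where "1 \<le> i" "i \<le> n" "t = ((1,1,2),(0,0,i+1),(1,1,n),(0,1,i))"
  | (J) k l r s where "(k,l) \<in> {(0,0),(0,1),(1,1)}" "(r,s) \<in> {(0,0),(0,1),(1,1)}"
      "t = ((0,k,l),(0,r,s),(0,s,r+n),(0,l,k+n))"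
  using assms
  unfolding T'_def W_def B'_def btile_def G_def Y_def A_def hatS_def hat_def J'_def jtile_def
    Jpairs_def
  by auto

lemma hat_mem_T':
  assumes "t \<in> T' n"
  shows "hat t \<in> T' n"
proof -
  have "hat ` W n \<subseteq> W n" by (force simp: W_def hat_def)
  moreover have "hat ` J' n \<subseteq> J' n" by (force simp: J'_def hat_jtile)
  ultimately have "hat ` T' n \<subseteq> T' n"
    unfolding T'_def hatS_def image_Un image_image hat_hat image_ident by blast
  then show ?thesis using assms by (rule subsetD[OF _ imageI])
qed

context
  fixes n :: int and t :: tile
  assumes t: "t \<in> T' n" and n: "1 \<le> n"
begin

lemma T'_sides_in_V:
  "RIGHT t \<in> V n \<and> TOP t \<in> V n \<and> LEFT t \<in> V n \<and> BOTTOM t \<in> V n"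
  using t n by (cases rule: T'_cases) (auto simp: V_def)

lemma T'_v0_RIGHT: "v0 (RIGHT t) = v0 (LEFT t)"
  and T'_v0_TOP: "v0 (TOP t) = v0 (BOTTOM t)"
  using t by (cases rule: T'_cases; auto)+

lemma T'_v2_TOP_if_v0_LEFT_1: "v0 (LEFT t) = 1 \<Longrightarrow> v2 (TOP t) = v2 (BOTTOM t) + 1"
  using t by (cases rule: T'_cases) auto

lemma T'_v2_BOTTOM_ge_if_v0_LEFT_0: "v0 (LEFT t) = 0 \<Longrightarrow> n \<le> v2 (BOTTOM t)"
  using t by (cases rule: T'_cases) auto

lemma T'_v2_TOP_le_if_v0_LEFT_BOTTOM_0:
  "v0 (LEFT t) = 0 \<Longrightarrow> v0 (BOTTOM t) = 0 \<Longrightarrow> v2 (TOP t) \<le> 1"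
  using t by (cases rule: T'_cases) auto

lemma T'_TOP_if_LEFT_00:
  "LEFT t = (0,0,c) \<Longrightarrow> 1 \<le> c \<Longrightarrow> TOP t = (1,1,1) \<or> TOP t = (0,0,0)"
  using t by (cases rule: T'_cases) auto

lemma T'_v2_LEFT_le_if_LEFT_00: "LEFT t = (0,0,c) \<Longrightarrow> c \<le> n"
  using t by (cases rule: T'_cases) auto

lemma T'_v1_RIGHT_if_v2_BOTTOM_n1:
  "v0 (LEFT t) = 0 \<Longrightarrow> v0 (BOTTOM t) = 1 \<Longrightarrow> v2 (BOTTOM t) = n + 1 \<Longrightarrow> v1 (RIGHT t) = 1"
  using t by (cases rule: T'_cases) auto

lemma T'_in_A_if_v1_LEFT_1:
  "v0 (LEFT t) = 0 \<Longrightarrow> v1 (LEFT t) = 1 \<Longrightarrow> v0 (BOTTOM t) = 1 \<Longrightarrow> v2 (BOTTOM t) = n \<Longrightarrow>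
    t \<in> A n"
  using t by (cases rule: T'_cases) (auto simp: A_def)

lemma T'_LEFT_if_TOP_01n1: "TOP t = (0,1,n+1) \<Longrightarrow> LEFT t = (1,1,n+1)"
  using t n by (cases rule: T'_cases) auto

lemma T'_BOTTOM_if_RIGHT_00n:
  "RIGHT t = (0,0,n) \<Longrightarrow> BOTTOM t = (1,1,n) \<or> n = 1 \<and> BOTTOM t = (0,1,1)"
  using t n by (cases rule: T'_cases) auto

lemma T'_TOP_ne_011_if_RIGHT_112: "n = 1 \<Longrightarrow> RIGHT t = (1,1,2) \<Longrightarrow> TOP t \<noteq> (0,1,1)"
  using t by (cases rule: T'_cases) auto

end

definition forbidden :: "int \<Rightarrow> tile set" where
  "forbidden n = insert (btile n n) (insert (jtile n 1 1 0 0) (A n))"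

lemma T'_eq_T_Un_forbidden:
  assumes "0 \<le> n"
  shows "T' n = T n \<union> forbidden n \<union> hatS (forbidden n)"
proof -
  have "B' n = insert (btile n n) (B n)"
    using assms by (auto simp: B'_def B_def btile_def)
  moreover have "J' n = J n \<union> {jtile n 0 0 1 1, jtile n 1 1 0 0}"
    by (auto simp: J_def J'_def Jpairs_def)
  ultimately show ?thesis
    unfolding T'_def T_def forbidden_def hatS_def by (auto simp: hat_jtile)
qed

definition transposed :: "(int \<times> int \<Rightarrow> tile) \<Rightarrow> int \<times> int \<Rightarrow> tile" where
  "transposed x = (\<lambda>(a, b). hat (x (b, a)))"

lemma transposed_apply [simp]: "transposed x (a, b) = hat (x (b, a))"
  by (simp add: transposed_def)

lemma Omega_mono: "S \<subseteq> S' \<Longrightarrow> Omega S \<subseteq> Omega S'"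
  by (auto simp: Omega_def)

lemma transposed_in_Omega:
  assumes x: "x \<in> Omega S" and hat_closed: "\<And>t. t \<in> S \<Longrightarrow> hat t \<in> S"
  shows "transposed x \<in> Omega S"
  unfolding Omega_def
proof (intro CollectI conjI allI)
  fix m
  show "transposed x m \<in> S"
    using x hat_closed by (cases m) (auto simp: Omega_def)
next
  fix a b
  show "RIGHT (transposed x (a, b)) = LEFT (transposed x (a + 1, b))"
    and "TOP (transposed x (a, b)) = BOTTOM (transposed x (a, b + 1))"
    using x by (simp_all add: Omega_def)
qed

(* Read off at column 0 and row 0; by v0_LEFT and v0_BOTTOM any other position gives the same value. *)
definition row_type :: "(int \<times> int \<Rightarrow> tile) \<Rightarrow> int \<Rightarrow> int" where
  "row_type x b = v0 (LEFT (x (0, b)))"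

definition col_type :: "(int \<times> int \<Rightarrow> tile) \<Rightarrow> int \<Rightarrow> int" where
  "col_type x a = v0 (BOTTOM (x (a, 0)))"

lemma row_type_transposed [simp]: "row_type (transposed x) = col_type x"
  by (simp add: row_type_def col_type_def fun_eq_iff)

locale T'_config =
  fixes n :: int and x :: "int \<times> int \<Rightarrow> tile"
  assumes n_pos: "1 \<le> n" and valid: "x \<in> Omega (T' n)"
begin

lemma tile: "x m \<in> T' n"
  using valid by (cases m) (simp add: Omega_def)

lemma match_h: "RIGHT (x (a, b)) = LEFT (x (a + 1, b))"
  and match_v: "TOP (x (a, b)) = BOTTOM (x (a, b + 1))"
  using valid by (simp_all add: Omega_def)

lemma sides_in_V:
  "RIGHT (x m) \<in> V n" "TOP (x m) \<in> V n" "LEFT (x m) \<in> V n" "BOTTOM (x m) \<in> V n"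
  using T'_sides_in_V[OF tile n_pos] by simp_all

lemma T'_config_transposed: "T'_config n (transposed x)"
  using n_pos transposed_in_Omega[OF valid hat_mem_T'] by unfold_locales

lemma v0_LEFT [simp]: "v0 (LEFT (x (a, b))) = row_type x b"
proof -
  have step: "v0 (LEFT (x (a + 1, b))) = v0 (LEFT (x (a, b)))" for a
    using match_h T'_v0_RIGHT[OF tile n_pos] by metis
  show ?thesis
    unfolding row_type_def
  proof (induction a rule: int_induct[where k = 0])
    case (step2 i)
    then show ?case using step[of "i - 1"] by simp
  qed (simp_all add: step)
qed

lemma v0_BOTTOM [simp]: "v0 (BOTTOM (x (a, b))) = col_type x a"
  using T'_config.v0_LEFT[OF T'_config_transposed, of b a] by simp

lemma v0_TOP [simp]: "v0 (TOP (x (a, b))) = col_type x a"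
  using T'_v0_TOP[OF tile n_pos] by simp

lemma row_type_cases: "row_type x b = 0 \<or> row_type x b = 1"
  using sides_in_V(3)[of "(0, b)"] by (auto simp: mem_V_iff)

lemma v2_BOTTOM_above:
  assumes "b < b'" "\<And>c. b < c \<Longrightarrow> c < b' \<Longrightarrow> row_type x c = 1"
  shows "v2 (BOTTOM (x (a, b'))) = v2 (TOP (x (a, b))) + (b' - b - 1)"
  using assms
proof (induction b' rule: int_gr_induct)
  case base
  then show ?case using match_v by simp
next
  case (step c)
  have "v2 (BOTTOM (x (a, c + 1))) = v2 (BOTTOM (x (a, c))) + 1"
    using T'_v2_TOP_if_v0_LEFT_1[OF tile[of "(a, c)"] n_pos] match_v step.prems step.hyps by simp
  then show ?case using step by simp
qed

lemma row_type_0_between: "\<exists>c. b < c \<and> c < b + n + 3 \<and> row_type x c = 0"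
proof (rule ccontr)
  assume "\<nexists>c. b < c \<and> c < b + n + 3 \<and> row_type x c = 0"
  then have "row_type x c = 1" if "b < c" "c < b + n + 3" for c
    using row_type_cases that by blast
  then have "v2 (BOTTOM (x (0, b + n + 3))) = v2 (TOP (x (0, b))) + (n + 2)"
    using v2_BOTTOM_above[of b "b + n + 3"] n_pos by simp
  moreover have "0 \<le> v2 (TOP (x (0, b)))" "v2 (BOTTOM (x (0, b + n + 3))) \<le> n + 1"
    using sides_in_V(2)[of "(0, b)"] sides_in_V(4)[of "(0, b + n + 3)"] by (auto simp: mem_V_iff)
  ultimately show False by simp
qed

lemma next_row_type_0_above:
  obtains b' where "b < b'" "row_type x b' = 0" "\<And>c. b < c \<Longrightarrow> c < b' \<Longrightarrow> row_type x c = 1"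
proof -
  obtain c where "b < c" "row_type x c = 0" using row_type_0_between by blast
  then obtain b' where "b < b'" "row_type x b' = 0"
    and no_0: "\<And>c. b < c \<Longrightarrow> c < b' \<Longrightarrow> row_type x c \<noteq> 0"
    by (rule int_first_above[where P = "\<lambda>d. row_type x d = 0"]) blast
  moreover have "row_type x c = 1" if "b < c" "c < b'" for c
    using no_0[OF that] row_type_cases[of c] by simp
  ultimately show ?thesis using that by blast
qed

lemma next_row_type_0_below:
  obtains b' where "b' < b" "row_type x b' = 0" "\<And>c. b' < c \<Longrightarrow> c < b \<Longrightarrow> row_type x c = 1"
proof -
  obtain c where "c < b" "row_type x c = 0" using row_type_0_between[of "b - n - 3"] by auto
  then obtain b' where "b' < b" "row_type x b' = 0"
    and no_0: "\<And>c. b' < c \<Longrightarrow> c < b \<Longrightarrow> row_type x c \<noteq> 0"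
    by (rule int_last_below[where P = "\<lambda>d. row_type x d = 0"]) blast
  moreover have "row_type x c = 1" if "b' < c" "c < b" for c
    using no_0[OF that] row_type_cases[of c] by simp
  ultimately show ?thesis using that by blast
qed

lemma col_type_0_right: "\<exists>c > a. col_type x c = 0"
  using T'_config.row_type_0_between[OF T'_config_transposed, of a] by auto

lemma A_col_type:
  assumes "x (a, b) \<in> A n"
  shows "col_type x a = 1"
proof -
  have "BOTTOM (x (a, b)) = (1, 1, n)" using assms by (auto simp: A_def)
  then show ?thesis using v0_BOTTOM[of a b] by simp
qed

lemma A_step:
  assumes A: "x (a, b) \<in> A n"
  shows "x (a + 1, b + n) \<in> A n"
proof -
  obtain i where "1 \<le> i" and xab: "x (a, b) = ((0,0,i+1),(1,1,2),(0,1,i),(1,1,n))"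
    using A by (auto simp: A_def)
  obtain b' where "b < b'" "row_type x b' = 0"
    and ones: "\<And>c. b < c \<Longrightarrow> c < b' \<Longrightarrow> row_type x c = 1"
    by (rule next_row_type_0_above[of b]) blast
  (* v2 climbs from 2 in column a and from 0 or 1 in column a + 1 up to the row b', where it must
     lie in [n, n + 1]; only the start 1 with b' = b + n survives. *)
  have ge_n: "n \<le> v2 (BOTTOM (x (a', b')))" for a'
    using T'_v2_BOTTOM_ge_if_v0_LEFT_0[OF tile n_pos] \<open>row_type x b' = 0\<close> by simp
  have col_a: "v2 (BOTTOM (x (a, b'))) = b' - b + 1"
    using v2_BOTTOM_above[OF \<open>b < b'\<close> ones, of a] xab by simp
  moreover have "v2 (BOTTOM (x (a, b'))) \<le> n + 1"
    using sides_in_V by (simp add: mem_V_iff)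
  moreover have col_a1: "v2 (BOTTOM (x (a + 1, b'))) = v2 (TOP (x (a + 1, b))) + (b' - b - 1)"
    using v2_BOTTOM_above[OF \<open>b < b'\<close> ones] .
  moreover have "LEFT (x (a + 1, b)) = (0, 0, i + 1)"
    using match_h[of a b] xab by simp
  then have "TOP (x (a + 1, b)) = (1,1,1) \<or> TOP (x (a + 1, b)) = (0,0,0)"
    using T'_TOP_if_LEFT_00[OF tile n_pos] \<open>1 \<le> i\<close> by simp
  ultimately have top: "TOP (x (a + 1, b)) = (1,1,1)" and b': "b' = b + n"
    using ge_n[of a] ge_n[of "a + 1"] by auto
  have "v1 (RIGHT (x (a, b'))) = 1"
    using T'_v1_RIGHT_if_v2_BOTTOM_n1[OF tile[of "(a, b')"] n_pos] A_col_type[OF A]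
      \<open>row_type x b' = 0\<close> col_a b' by simp
  then have "v1 (LEFT (x (a + 1, b'))) = 1" using match_h[of a b'] by simp
  moreover have "col_type x (a + 1) = 1"
    using v0_TOP[of "a + 1" b] top by simp
  ultimately show ?thesis
    using T'_in_A_if_v1_LEFT_1[OF tile n_pos] \<open>row_type x b' = 0\<close> col_a1 top b' by simp
qed

lemma A_repeats: "x (a, b) \<in> A n \<Longrightarrow> x (a + int m, b + int m * n) \<in> A n"
proof (induction m)
  case (Suc m)
  have "x (a + int m + 1, b + int m * n + n) \<in> A n" using A_step Suc by blast
  then show ?case by (simp add: algebra_simps)
qed simp

lemma no_A: "x (a, b) \<notin> A n"
proof
  assume "x (a, b) \<in> A n"
  obtain c where "a < c" "col_type x c = 0" using col_type_0_right by blast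
  moreover have "x (c, b + int (nat (c - a)) * n) \<in> A n"
    using A_repeats[OF \<open>x (a, b) \<in> A n\<close>, of "nat (c - a)"] \<open>a < c\<close> by simp
  ultimately show False using A_col_type by fastforce
qed

lemma no_jtile_1100: "x (a, b) \<noteq> jtile n 1 1 0 0"
proof
  assume "x (a, b) = jtile n 1 1 0 0"
  then have "col_type x a = 0" and bottom: "BOTTOM (x (a, b)) = (0, 1, n + 1)"
    and "RIGHT (x (a - 1, b)) = (0, 0, n)"
    using v0_BOTTOM[of a b] match_h[of "a - 1" b] by (auto simp: jtile_def)
  then consider "BOTTOM (x (a - 1, b)) = (1, 1, n)" | "n = 1" "BOTTOM (x (a - 1, b)) = (0, 1, 1)"
    using T'_BOTTOM_if_RIGHT_00n[OF tile n_pos] by blast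
  then show False
  proof cases
    case 1
    obtain b' where "b' < b" "row_type x b' = 0"
      and ones: "\<And>c. b' < c \<Longrightarrow> c < b \<Longrightarrow> row_type x c = 1"
      by (rule next_row_type_0_below[of b]) blast
    (* Over the rows between b' and b, v2 rises from at most 1 to n + 1 in column a,
       but from at least 1 to n in column a - 1. *)
    have "v2 (BOTTOM (x (a, b))) = v2 (TOP (x (a, b'))) + (b - b' - 1)"
      and "v2 (BOTTOM (x (a - 1, b))) = v2 (TOP (x (a - 1, b'))) + (b - b' - 1)"
      using v2_BOTTOM_above[OF \<open>b' < b\<close> ones] by blast+
    moreover have "v2 (TOP (x (a, b'))) \<le> 1"
      using T'_v2_TOP_le_if_v0_LEFT_BOTTOM_0[OF tile n_pos] \<open>row_type x b' = 0\<close> \<open>col_type x a = 0\<close>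
      by simp
    moreover have "col_type x (a - 1) = 1"
      using v0_BOTTOM[of "a - 1" b] 1 by simp
    then have "1 \<le> v2 (TOP (x (a - 1, b')))"
      using sides_in_V(2)[of "(a - 1, b')"] by (simp add: mem_V_iff)
    ultimately show False using 1 bottom by simp
  next
    case 2
    have "TOP (x (a, b - 1)) = (0, 1, n + 1)" using match_v[of a "b - 1"] bottom by simp
    then have "RIGHT (x (a - 1, b - 1)) = (1, 1, 2)"
      using T'_LEFT_if_TOP_01n1[OF tile n_pos] match_h[of "a - 1" "b - 1"] 2 by simp
    moreover have "TOP (x (a - 1, b - 1)) = (0, 1, 1)" using match_v[of "a - 1" "b - 1"] 2 by simp
    ultimately show False using T'_TOP_ne_011_if_RIGHT_112[OF tile n_pos] 2 by blast
  qed
qed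

lemma no_btile_nn: "x (a, b) \<noteq> btile n n"
proof
  assume "x (a, b) = btile n n"
  then have "LEFT (x (a + 1, b)) = (0, 0, n + 1)" using match_h[of a b] by (simp add: btile_def)
  then show False using T'_v2_LEFT_le_if_LEFT_00[OF tile n_pos] by fastforce
qed

lemma not_forbidden: "x m \<notin> forbidden n"
  using no_A no_jtile_1100 no_btile_nn by (cases m) (auto simp: forbidden_def)

lemma tile_in_T: "x m \<in> T n"
proof -
  obtain a b where m: "m = (a, b)" by fastforce
  have "hat (x (a, b)) \<notin> forbidden n"
    using T'_config.not_forbidden[OF T'_config_transposed, of "(b, a)"] by simp
  then show ?thesis
    using tile[of m] not_forbidden[of m] T'_eq_T_Un_forbidden n_pos m by (auto simp: mem_hatS_iff)
qed

end

theorem proposition7p4: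
  fixes n :: int
  assumes "1 \<le> n"
  shows "Omega (T' n) = Omega (T n)"
proof
  show "Omega (T n) \<subseteq> Omega (T' n)"
    using T'_eq_T_Un_forbidden assms by (intro Omega_mono) auto
  show "Omega (T' n) \<subseteq> Omega (T n)"
  proof
    fix x
    assume "x \<in> Omega (T' n)"
    then interpret T'_config n x using assms by unfold_locales
    show "x \<in> Omega (T n)" using valid tile_in_T by (simp add: Omega_def)
  qed
qed

end
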